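(* For every $t\in[0,1)$, the generalized Cesàro operator $C_t: VH(\mathbb D)\to VH(\mathbb D)$ is compact.
   Context: $\mathbb D$ is the open unit disc. Define $v(z)=1$ if $|z|\le 1-1/e$ and $v(z)=(-\log(1-|z|))^{-1}$ if $1-1/e\le|z|<1$, $v_k=v^k$, $H^\infty_{v_k}=\{f \text{ analytic on }\mathbb D:\sup_{z\in\mathbb D}v_k(z)|f(z)|<\infty\}$ normed by this sup, and $VH(\mathbb D)=\bigcup_kH^\infty_{v_k}$ with the finest locally convex topology making all inclusions continuous. For $t\in[0,1]$, $C_tf(z)=\frac1z\int_0^z\frac{f(\zeta)}{1-t\zeta}\,d\zeta$ for $z\neq0$ and $C_tf(0)=f(0)$. A linear operator $T$ on a locally convex space $X$ is compact if there exists a $0$-neighbourhood $U$ in $X$ with $T(U)$ relatively compact in $X$. *)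

theory Defs
  imports "HOL-Complex_Analysis.Complex_Analysis"
begin

text \<open>Functions on the disc are represented as functions complex => complex that
  vanish outside the open unit disc (so each analytic function on D has exactly
  one representative).\<close>

definition vw :: "complex \<Rightarrow> real" where
  "vw z = (if norm z \<le> 1 - 1 / exp 1 then 1 else 1 / (- ln (1 - norm z)))"

definition Hv :: "nat \<Rightarrow> (complex \<Rightarrow> complex) set" where
  "Hv k = {f. f holomorphic_on ball 0 1 \<and> (\<forall>z. z \<notin> ball 0 1 \<longrightarrow> f z = 0)
              \<and> (\<exists>C. \<forall>z\<in>ball 0 1. vw z ^ k * norm (f z) \<le> C)}"

definition vnorm :: "nat \<Rightarrow> (complex \<Rightarrow> complex) \<Rightarrow> real" where
  "vnorm k f = (SUP z\<in>ball 0 1. vw z ^ k * norm (f z))"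

definition VH :: "(complex \<Rightarrow> complex) set" where
  "VH = (\<Union>k. Hv k)"

text \<open>Basic 0-neighbourhoods of the inductive limit topology: absolutely convex
  subsets of VH whose trace on every step H_{v_k} contains a norm ball.\<close>
definition VH_basic_nbhd :: "(complex \<Rightarrow> complex) set \<Rightarrow> bool" where
  "VH_basic_nbhd W \<longleftrightarrow> W \<subseteq> VH
     \<and> (\<forall>f\<in>W. \<forall>g\<in>W. \<forall>a b :: complex. norm a + norm b \<le> 1 \<longrightarrow> (\<lambda>z. a * f z + b * g z) \<in> W)
     \<and> (\<forall>k. \<exists>\<epsilon>>0. {f \<in> Hv k. vnorm k f < \<epsilon>} \<subseteq> W)"

definition VH_top :: "(complex \<Rightarrow> complex) topology" where
  "VH_top = topology (\<lambda>S. S \<subseteq> VH \<and>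
      (\<forall>f\<in>S. \<exists>W. VH_basic_nbhd W \<and> (\<lambda>g z. f z + g z) ` W \<subseteq> S))"

definition VH_zero_nbhd :: "(complex \<Rightarrow> complex) set \<Rightarrow> bool" where
  "VH_zero_nbhd U \<longleftrightarrow> U \<subseteq> VH \<and> (\<exists>W. VH_basic_nbhd W \<and> W \<subseteq> U)"

definition VH_compact_op :: "((complex \<Rightarrow> complex) \<Rightarrow> (complex \<Rightarrow> complex)) \<Rightarrow> bool" where
  "VH_compact_op T \<longleftrightarrow> (\<exists>U. VH_zero_nbhd U \<and> T ` U \<subseteq> VH
       \<and> compactin VH_top (VH_top closure_of (T ` U)))"

definition Cesaro_t :: "real \<Rightarrow> (complex \<Rightarrow> complex) \<Rightarrow> (complex \<Rightarrow> complex)" where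
  "Cesaro_t t f z = (if z \<notin> ball 0 1 then 0
      else if z = 0 then f 0
      else (1 / z) * contour_integral (linepath 0 z) (\<lambda>\<zeta>. f \<zeta> / (1 - of_real t * \<zeta>)))"

end

theory Submission
  imports Defs
begin

(* C_t maps every step H_{v_k} boundedly into H^infinity. Indeed the weight gives
   |f(w)| <= |f|_k (1 - log (1 - |w|))^k <= (2k+1)^k |f|_k / sqrt (1 - |w|), which is
   integrable along the radius [0, z], so that |C_t f(z)| <= 2 (2k+1)^k / (1 - t) |f|_k.
   Hence the f with sup |C_t f| <= 1 form a 0-neighbourhood of VH that C_t maps into the
   closed unit ball of H^infinity. This ball is compact in VH: by Montel's theorem every
   sequence in it has a locally uniformly convergent subsequence, and since v tends to 0 at
   the boundary, for functions bounded by 1 this is convergence in the norm of H_{v_1},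
   a topology finer than the one induced by VH. *)

section \<open>The weight\<close>

lemma vw_eq_inverse_ln:
  assumes "norm z < 1" "\<not> norm z \<le> 1 - 1 / exp 1"
  shows "vw z = 1 / (- ln (1 - norm z))" and "1 < - ln (1 - norm z)"
proof -
  have "ln (1 - norm z) < ln (1 / exp 1)"
    using assms by (intro ln_less_cancel_iff[THEN iffD2]) auto
  then show "1 < - ln (1 - norm z)" by (simp add: ln_div)
  show "vw z = 1 / (- ln (1 - norm z))" using assms by (simp add: vw_def)
qed

lemma vw_pos: "norm z < 1 \<Longrightarrow> 0 < vw z"
  by (cases "norm z \<le> 1 - 1 / exp 1") (auto simp: vw_def dest: vw_eq_inverse_ln)

lemma vw_le_1:
  assumes "norm z < 1"
  shows "vw z \<le> 1"
proof (cases "norm z \<le> 1 - 1 / exp 1")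
  case False
  have "1 / L \<le> 1" if "1 < L" for L :: real using that by simp
  with vw_eq_inverse_ln[OF assms False] show ?thesis by metis
qed (simp add: vw_def)

lemma vw_0 [simp]: "vw 0 = 1"
  by (simp add: vw_def)

lemma vw_mult_one_minus_ln_ge_1:
  assumes "norm z < 1"
  shows "1 \<le> vw z * (1 - ln (1 - norm z))"
proof (cases "norm z \<le> 1 - 1 / exp 1")
  case True
  then show ?thesis using assms by (simp add: vw_def)
next
  case False
  have "1 \<le> 1 / (- l) * (1 - l)" if "1 < - l" for l :: real using that by (simp add: field_simps)
  with vw_eq_inverse_ln[OF assms False] show ?thesis by metis
qed

lemma vw_le_near_boundary:
  assumes "0 < e" "norm z < 1" "1 - exp (- (1 + 1 / e)) < norm z"
  shows "vw z \<le> e"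
proof -
  have "exp (- (1 + 1 / e)) \<le> exp (-1)" using assms(1) by simp
  then have far: "\<not> norm z \<le> 1 - 1 / exp 1"
    using assms(3) by (simp add: exp_minus inverse_eq_divide)
  have "ln (1 - norm z) < ln (exp (- (1 + 1 / e)))"
    using assms(2,3) by (intro ln_less_cancel_iff[THEN iffD2]) auto
  then have "1 / e < - ln (1 - norm z)" by simp
  moreover have "1 / L \<le> e" if "1 / e < L" for L
    using less_imp_inverse_less[OF that] assms(1) by (simp add: inverse_eq_divide)
  ultimately show ?thesis using vw_eq_inverse_ln[OF assms(2) far] by metis
qed

section \<open>Weighted spaces and the inductive limit topology\<close>

lemma Hv_mono:
  assumes "k \<le> m"
  shows "Hv k \<subseteq> Hv m"
proof
  fix f assume "f \<in> Hv k"
  then obtain C where f: "f holomorphic_on ball 0 1" "\<forall>z. z \<notin> ball 0 1 \<longrightarrow> f z = 0"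
    and C: "\<forall>z\<in>ball 0 1. vw z ^ k * norm (f z) \<le> C" by (auto simp: Hv_def)
  have "vw z ^ m * norm (f z) \<le> C" if z: "z \<in> ball 0 1" for z
  proof -
    have "vw z ^ m \<le> vw z ^ k"
      using vw_pos[of z] vw_le_1[of z] z assms by (intro power_decreasing) auto
    then have "vw z ^ m * norm (f z) \<le> vw z ^ k * norm (f z)" by (simp add: mult_right_mono)
    with C z show ?thesis by force
  qed
  with f show "f \<in> Hv m" unfolding Hv_def by blast
qed

lemma Hv_lincomb:
  assumes "f \<in> Hv k" "g \<in> Hv k"
  shows "(\<lambda>z. a * f z + b * g z) \<in> Hv k"
proof -
  obtain C where f: "f holomorphic_on ball 0 1" "\<forall>z. z \<notin> ball 0 1 \<longrightarrow> f z = 0"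
    and C: "\<forall>z\<in>ball 0 1. vw z ^ k * norm (f z) \<le> C" using assms by (auto simp: Hv_def)
  obtain D where g: "g holomorphic_on ball 0 1" "\<forall>z. z \<notin> ball 0 1 \<longrightarrow> g z = 0"
    and D: "\<forall>z\<in>ball 0 1. vw z ^ k * norm (g z) \<le> D" using assms by (auto simp: Hv_def)
  have "vw z ^ k * norm (a * f z + b * g z) \<le> norm a * C + norm b * D" if z: "z \<in> ball 0 1" for z
  proof -
    have "vw z ^ k * norm (a * f z + b * g z)
        \<le> vw z ^ k * (norm a * norm (f z) + norm b * norm (g z))"
      using vw_pos[of z] z
      by (intro mult_left_mono) (auto intro: order.trans[OF norm_triangle_ineq] simp: norm_mult)
    also have "\<dots> = norm a * (vw z ^ k * norm (f z)) + norm b * (vw z ^ k * norm (g z))"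
      by (simp add: algebra_simps)
    also have "\<dots> \<le> norm a * C + norm b * D"
      using C D z by (intro add_mono mult_left_mono) auto
    finally show ?thesis .
  qed
  moreover have "(\<lambda>z. a * f z + b * g z) holomorphic_on ball 0 1"
    using f g by (intro holomorphic_intros)
  ultimately show ?thesis using f g by (auto simp: Hv_def intro!: exI[of _ "norm a * C + norm b * D"])
qed

lemma Hv_diff: "f \<in> Hv k \<Longrightarrow> g \<in> Hv k \<Longrightarrow> (\<lambda>z. f z - g z) \<in> Hv k"
  using Hv_lincomb[of f k g 1 "-1"] by simp

lemma VH_lincomb:
  assumes "f \<in> VH" "g \<in> VH"
  shows "(\<lambda>z. a * f z + b * g z) \<in> VH"
proof -
  obtain k m where "f \<in> Hv k" "g \<in> Hv m" using assms by (auto simp: VH_def)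
  then have "f \<in> Hv (max k m)" "g \<in> Hv (max k m)"
    using Hv_mono[of k "max k m"] Hv_mono[of m "max k m"] by auto
  then show ?thesis using Hv_lincomb[of f "max k m" g a b] unfolding VH_def by blast
qed

lemma VH_add: "f \<in> VH \<Longrightarrow> g \<in> VH \<Longrightarrow> (\<lambda>z. f z + g z) \<in> VH"
  using VH_lincomb[of f g 1 1] by simp

lemma VH_holomorphic: "f \<in> VH \<Longrightarrow> f holomorphic_on ball 0 1"
  by (auto simp: VH_def Hv_def)

lemma vnorm_ge:
  assumes "f \<in> Hv k" "z \<in> ball 0 1"
  shows "vw z ^ k * norm (f z) \<le> vnorm k f"
proof -
  obtain C where "\<forall>z\<in>ball 0 1. vw z ^ k * norm (f z) \<le> C" using assms by (auto simp: Hv_def)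
  then show ?thesis unfolding vnorm_def by (intro cSUP_upper[OF assms(2)] bdd_aboveI2) auto
qed

lemma vnorm_nonneg: "f \<in> Hv k \<Longrightarrow> 0 \<le> vnorm k f"
  by (rule order.trans[OF norm_ge_zero]) (use vnorm_ge[of f k 0] in simp)

lemma vnorm_diff_commute: "vnorm k (\<lambda>z. f z - g z) = vnorm k (\<lambda>z. g z - f z)"
  unfolding vnorm_def by (simp add: norm_minus_commute)

lemma vnorm_add_le:
  assumes "f \<in> Hv k" "g \<in> Hv k"
  shows "vnorm k (\<lambda>z. f z + g z) \<le> vnorm k f + vnorm k g"
  unfolding vnorm_def[of k "\<lambda>z. f z + g z"]
proof (rule cSUP_least)
  fix z :: complex assume z: "z \<in> ball 0 1"
  have "vw z ^ k * norm (f z + g z) \<le> vw z ^ k * (norm (f z) + norm (g z))"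
    using vw_pos[of z] z by (intro mult_left_mono norm_triangle_ineq) auto
  also have "\<dots> \<le> vnorm k f + vnorm k g"
    using vnorm_ge[OF assms(1) z] vnorm_ge[OF assms(2) z] by (simp add: distrib_left)
  finally show "vw z ^ k * norm (f z + g z) \<le> vnorm k f + vnorm k g" .
qed simp

lemma VH_basic_nbhd_Int:
  assumes W: "VH_basic_nbhd W1" "VH_basic_nbhd W2"
  shows "VH_basic_nbhd (W1 \<inter> W2)"
proof -
  have "\<exists>\<epsilon>>0. {f \<in> Hv k. vnorm k f < \<epsilon>} \<subseteq> W1 \<inter> W2" for k
  proof -
    obtain e1 where "e1 > 0" "{f \<in> Hv k. vnorm k f < e1} \<subseteq> W1"
      using W(1) unfolding VH_basic_nbhd_def by blast
    moreover obtain e2 where "e2 > 0" "{f \<in> Hv k. vnorm k f < e2} \<subseteq> W2"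
      using W(2) unfolding VH_basic_nbhd_def by blast
    ultimately show ?thesis by (intro exI[of _ "min e1 e2"]) auto
  qed
  with W show ?thesis unfolding VH_basic_nbhd_def by blast
qed

lemma istopology_VH_open:
  "istopology (\<lambda>S. S \<subseteq> VH \<and> (\<forall>f\<in>S. \<exists>W. VH_basic_nbhd W \<and> (\<lambda>g z. f z + g z) ` W \<subseteq> S))"
  unfolding istopology_def
proof (rule conjI; (intro allI impI)?)
  fix S T
  assume S: "S \<subseteq> VH \<and> (\<forall>f\<in>S. \<exists>W. VH_basic_nbhd W \<and> (\<lambda>g z. f z + g z) ` W \<subseteq> S)"
    and T: "T \<subseteq> VH \<and> (\<forall>f\<in>T. \<exists>W. VH_basic_nbhd W \<and> (\<lambda>g z. f z + g z) ` W \<subseteq> T)"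
  show "S \<inter> T \<subseteq> VH \<and>
      (\<forall>f\<in>S \<inter> T. \<exists>W. VH_basic_nbhd W \<and> (\<lambda>g z. f z + g z) ` W \<subseteq> S \<inter> T)"
  proof (intro conjI ballI)
    show "S \<inter> T \<subseteq> VH" using S by blast
    fix f assume "f \<in> S \<inter> T"
    then obtain W1 W2 where W: "VH_basic_nbhd W1" "VH_basic_nbhd W2"
      and "(\<lambda>g z. f z + g z) ` W1 \<subseteq> S" "(\<lambda>g z. f z + g z) ` W2 \<subseteq> T"
      using S T by (meson IntD1 IntD2)
    then have "(\<lambda>g z. f z + g z) ` (W1 \<inter> W2) \<subseteq> S \<inter> T" by blast
    with VH_basic_nbhd_Int[OF W]
    show "\<exists>W. VH_basic_nbhd W \<and> (\<lambda>g z. f z + g z) ` W \<subseteq> S \<inter> T" by blast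
  qed
next
  fix K
  assume K: "\<forall>S\<in>K. S \<subseteq> VH \<and> (\<forall>f\<in>S. \<exists>W. VH_basic_nbhd W \<and> (\<lambda>g z. f z + g z) ` W \<subseteq> S)"
  show "\<Union>K \<subseteq> VH \<and> (\<forall>f\<in>\<Union>K. \<exists>W. VH_basic_nbhd W \<and> (\<lambda>g z. f z + g z) ` W \<subseteq> \<Union>K)"
  proof (intro conjI ballI)
    show "\<Union>K \<subseteq> VH" using K by blast
    fix f assume "f \<in> \<Union>K"
    then obtain S where S: "S \<in> K" "f \<in> S" by blast
    with K obtain W where "VH_basic_nbhd W" "(\<lambda>g z. f z + g z) ` W \<subseteq> S" by blast
    with S show "\<exists>W. VH_basic_nbhd W \<and> (\<lambda>g z. f z + g z) ` W \<subseteq> \<Union>K" by blast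
  qed
qed

lemma openin_VH_top:
  "openin VH_top S \<longleftrightarrow>
     S \<subseteq> VH \<and> (\<forall>f\<in>S. \<exists>W. VH_basic_nbhd W \<and> (\<lambda>g z. f z + g z) ` W \<subseteq> S)"
  using topology_inverse'[OF istopology_VH_open] unfolding VH_top_def by (rule fun_cong)

lemma VH_basic_nbhd_VH: "VH_basic_nbhd VH"
  unfolding VH_basic_nbhd_def
proof (intro conjI allI ballI impI)
  show "\<exists>\<epsilon>>0. {f \<in> Hv k. vnorm k f < \<epsilon>} \<subseteq> VH" for k
    by (intro exI[of _ 1]) (auto simp: VH_def)
qed (auto intro: VH_lincomb)

lemma topspace_VH_top: "topspace VH_top = VH"
proof
  show "topspace VH_top \<subseteq> VH" unfolding topspace_def openin_VH_top by auto
  have "openin VH_top VH" unfolding openin_VH_top using VH_basic_nbhd_VH VH_add by blast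
  then show "VH \<subseteq> topspace VH_top" by (rule openin_subset)
qed

lemma VH_basic_nbhd_point_eval:
  assumes "z \<in> ball 0 1" "0 < \<delta>"
  shows "VH_basic_nbhd {g \<in> VH. norm (g z) \<le> \<delta>}"
  unfolding VH_basic_nbhd_def
proof (intro conjI allI ballI impI)
  fix g h :: "complex \<Rightarrow> complex" and a b :: complex
  assume g: "g \<in> {g \<in> VH. norm (g z) \<le> \<delta>}" and h: "h \<in> {g \<in> VH. norm (g z) \<le> \<delta>}"
    and ab: "norm a + norm b \<le> 1"
  have "norm (a * g z + b * h z) \<le> norm a * norm (g z) + norm b * norm (h z)"
    using norm_triangle_ineq[of "a * g z" "b * h z"] by (simp add: norm_mult)
  also have "\<dots> \<le> norm a * \<delta> + norm b * \<delta>"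
    using g h by (intro add_mono mult_left_mono) auto
  also have "\<dots> \<le> \<delta>"
    using mult_right_mono[OF ab, of \<delta>] assms(2) by (simp add: distrib_right)
  finally show "(\<lambda>z. a * g z + b * h z) \<in> {g \<in> VH. norm (g z) \<le> \<delta>}"
    using g h VH_lincomb by auto
next
  fix k
  have vp: "0 < vw z ^ k" using vw_pos[of z] assms by simp
  have "g \<in> {g \<in> VH. norm (g z) \<le> \<delta>}" if g: "g \<in> Hv k" "vnorm k g < \<delta> * vw z ^ k" for g
  proof -
    have "vw z ^ k * norm (g z) < vw z ^ k * \<delta>"
      using vnorm_ge[OF g(1) assms(1)] g(2) by (simp add: mult.commute)
    then show ?thesis using vp g(1) by (auto simp: VH_def)
  qed
  then show "\<exists>\<epsilon>>0. {g \<in> Hv k. vnorm k g < \<epsilon>} \<subseteq> {g \<in> VH. norm (g z) \<le> \<delta>}"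
    using vp assms(2) by (intro exI[of _ "\<delta> * vw z ^ k"]) auto
qed auto

section \<open>The generalized Cesaro operator\<close>

lemma norm_one_minus_of_real_mult_ge:
  fixes w :: complex
  assumes "0 \<le> t" "norm w \<le> 1"
  shows "1 - t \<le> norm (1 - of_real t * w)"
proof -
  have "norm (of_real t * w) \<le> t"
    using assms mult_left_le_one_le[of t "norm w"] by (simp add: norm_mult mult.commute)
  then show ?thesis using norm_triangle_ineq2[of 1 "of_real t * w"] by simp
qed

lemma Cesaro_integrand_holomorphic:
  assumes "f holomorphic_on ball 0 1" "0 \<le> t" "t < 1"
  shows "(\<lambda>w. f w / (1 - of_real t * w)) holomorphic_on ball 0 1"
proof (intro holomorphic_intros assms(1))
  fix w :: complex assume "w \<in> ball 0 1"
  then have "1 - t \<le> norm (1 - of_real t * w)"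
    using norm_one_minus_of_real_mult_ge[of t w] assms(2) by simp
  then have "0 < norm (1 - of_real t * w)" using assms(3) by linarith
  then show "1 - of_real t * w \<noteq> 0" by auto
qed

lemma has_field_derivative_contour_integral_linepath:
  assumes "h holomorphic_on S" "open S" "convex S" "a \<in> S" "x \<in> S"
  shows "((\<lambda>x. contour_integral (linepath a x) h) has_field_derivative h x) (at x)"
proof -
  have "((\<lambda>x. contour_integral (linepath a x) h) has_field_derivative h x) (at x within S)"
  proof (rule triangle_contour_integrals_convex_primitive)
    show "continuous_on S h" using assms(1) by (rule holomorphic_on_imp_continuous_on)
    fix b c assume "b \<in> S" "c \<in> S"
    then have "convex hull {a, b, c} \<subseteq> S" using assms by (intro hull_minimal) auto
    then have "(h has_contour_integral 0) (linepath a b +++ linepath b c +++ linepath c a)"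
      by (intro Cauchy_theorem_triangle holomorphic_on_subset[OF assms(1)])
    then show "contour_integral (linepath a b) h + contour_integral (linepath b c) h
        + contour_integral (linepath c a) h = 0"
      by (rule has_chain_integral_chain_integral3)
  qed (use assms in auto)
  then show ?thesis using at_within_open[OF assms(5,2)] by simp
qed

lemma Cesaro_t_holomorphic:
  assumes "f holomorphic_on ball 0 1" "0 \<le> t" "t < 1"
  shows "Cesaro_t t f holomorphic_on ball 0 1"
proof -
  define F where "F = (\<lambda>x. contour_integral (linepath 0 x) (\<lambda>w. f w / (1 - of_real t * w)))"
  have F': "(F has_field_derivative f x / (1 - of_real t * x)) (at x)" if "x \<in> ball 0 1" for x
    unfolding F_def using that
    by (intro has_field_derivative_contour_integral_linepath[where S = "ball 0 1"]
        Cesaro_integrand_holomorphic assms) auto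
  then have "F holomorphic_on ball 0 1"
    unfolding holomorphic_on_open[OF open_ball] by blast
  then have "(\<lambda>z. if z = 0 then deriv F 0 else (F z - F 0) / (z - 0)) holomorphic_on ball 0 1"
    by (rule pole_lemma) simp
  moreover have "deriv F 0 = f 0" using DERIV_imp_deriv[OF F'[of 0]] by simp
  ultimately show ?thesis
    by (elim holomorphic_transform) (simp add: Cesaro_t_def F_def)
qed

lemma Cesaro_t_lincomb:
  assumes f: "f holomorphic_on ball 0 1" and g: "g holomorphic_on ball 0 1"
    and t: "0 \<le> t" "t < 1" and z: "z \<in> ball 0 1"
  shows "Cesaro_t t (\<lambda>w. a * f w + b * g w) z = a * Cesaro_t t f z + b * Cesaro_t t g z"
proof (cases "z = 0")
  case False
  have "closed_segment 0 z \<subseteq> ball 0 1" using z by (intro closed_segment_subset) auto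
  then have int: "(\<lambda>w. h w / (1 - of_real t * w)) contour_integrable_on linepath 0 z"
    if "h holomorphic_on ball 0 1" for h
    by (intro contour_integrable_continuous_linepath continuous_on_subset[OF _ \<open>closed_segment 0 z \<subseteq> _\<close>]
        holomorphic_on_imp_continuous_on Cesaro_integrand_holomorphic that t)
  have "contour_integral (linepath 0 z) (\<lambda>w. a * (f w / (1 - of_real t * w)) + b * (g w / (1 - of_real t * w)))
      = a * contour_integral (linepath 0 z) (\<lambda>w. f w / (1 - of_real t * w))
        + b * contour_integral (linepath 0 z) (\<lambda>w. g w / (1 - of_real t * w))"
    by (simp only: contour_integral_add contour_integrable_lmul contour_integral_lmul int f g)
  then show ?thesis using False z by (simp add: Cesaro_t_def add_divide_distrib algebra_simps)
qed (use z in \<open>simp add: Cesaro_t_def\<close>)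

lemma Cesaro_t_outside: "z \<notin> ball 0 1 \<Longrightarrow> Cesaro_t t f z = 0"
  by (simp add: Cesaro_t_def)

lemma sqrt_mult_one_minus_ln_power_le:
  fixes x :: real
  assumes "0 < x" "x \<le> 1"
  shows "sqrt x * (1 - ln x) ^ k \<le> (2 * real k + 1) ^ k"
proof -
  define y where "y = - ln x"
  define c where "c = 2 * real k + 1"
  have y: "0 \<le> y" and c: "1 \<le> c" using assms by (simp_all add: y_def c_def)
  \<comment> \<open>\<open>(1 + y)\<^sup>k \<le> c\<^sup>k exp (k y / c) \<le> c\<^sup>k exp (y / 2) = c\<^sup>k / sqrt x\<close>\<close>
  have "(1 + y) / c \<le> 1 + y / c" using c y by (simp add: divide_simps)
  also have "\<dots> \<le> exp (y / c)" by (rule exp_ge_add_one_self)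
  finally have "((1 + y) / c) ^ k \<le> exp (y / c) ^ k"
    using c y by (intro power_mono) auto
  also have "\<dots> = exp (real k * y / c)" by (simp add: exp_of_nat_mult[symmetric])
  also have "\<dots> \<le> exp (y / 2)"
    using y c by (simp add: c_def divide_simps) (simp add: mult_right_mono algebra_simps)
  finally have "(1 + y) ^ k \<le> c ^ k * exp (y / 2)"
    using c by (simp add: power_divide divide_le_eq mult.commute)
  moreover have "sqrt x = exp (- y / 2)"
    using assms by (simp add: y_def ln_sqrt[symmetric])
  ultimately have "sqrt x * (1 + y) ^ k \<le> exp (- y / 2) * (c ^ k * exp (y / 2))"
    by (simp add: mult_left_mono)
  also have "\<dots> = c ^ k" by (simp add: exp_minus field_simps)
  finally show ?thesis by (simp add: y_def c_def)
qed

lemma Hv_growth_bound: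
  assumes "f \<in> Hv k" "w \<in> ball 0 1"
  shows "norm (f w) * sqrt (1 - norm w) \<le> vnorm k f * (2 * real k + 1) ^ k"
proof -
  define L where "L = 1 - ln (1 - norm w)"
  have w: "norm w < 1" using assms(2) by simp
  then have "ln (1 - norm w) \<le> 0" by simp
  then have "0 \<le> L" by (simp add: L_def)
  have "norm (f w) \<le> norm (f w) * (vw w * L) ^ k"
    using vw_mult_one_minus_ln_ge_1[OF w] by (simp add: L_def one_le_power mult_le_cancel_left1)
  also have "\<dots> = (vw w ^ k * norm (f w)) * L ^ k" by (simp add: power_mult_distrib)
  also have "\<dots> \<le> vnorm k f * L ^ k"
    using vnorm_ge[OF assms] \<open>0 \<le> L\<close> by (simp add: mult_right_mono)
  finally have "norm (f w) * sqrt (1 - norm w) \<le> vnorm k f * (sqrt (1 - norm w) * L ^ k)"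
    using w by (simp add: mult_right_mono mult.assoc mult.left_commute)
  also have "\<dots> \<le> vnorm k f * (2 * real k + 1) ^ k"
    unfolding L_def using w vnorm_nonneg[OF assms(1)]
    by (intro mult_left_mono sqrt_mult_one_minus_ln_power_le) auto
  finally show ?thesis .
qed

lemma has_integral_inverse_sqrt_one_minus:
  fixes r :: real
  assumes "0 < r" "r < 1"
  shows "((\<lambda>s. 1 / sqrt (1 - s * r)) has_integral 2 / r * (1 - sqrt (1 - r))) {0..1}"
proof -
  have "((\<lambda>s. 1 / sqrt (1 - s * r)) has_integral
      (- (2 / r) * sqrt (1 - 1 * r)) - (- (2 / r) * sqrt (1 - 0 * r))) {0..1}"
  proof (rule fundamental_theorem_of_calculus)
    fix s :: real assume s: "s \<in> {0..1}"
    have "s * r \<le> r" using s assms by (intro mult_left_le_one_le) auto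
    then have "0 < 1 - s * r" using assms by linarith
    then have "((\<lambda>s. - (2 / r) * sqrt (1 - s * r)) has_real_derivative
        - (2 / r) * (inverse (sqrt (1 - s * r)) / 2 * (- r))) (at s within {0..1})"
      by (intro DERIV_cmult DERIV_chain2[OF DERIV_real_sqrt] derivative_eq_intros) auto
    moreover have "- (2 / r) * (inverse (sqrt (1 - s * r)) / 2 * (- r)) = 1 / sqrt (1 - s * r)"
      using assms by (simp add: field_simps)
    ultimately show "((\<lambda>s. - (2 / r) * sqrt (1 - s * r)) has_vector_derivative 1 / sqrt (1 - s * r))
        (at s within {0..1})"
      by (simp add: has_real_derivative_iff_has_vector_derivative)
  qed simp
  then show ?thesis by (simp add: algebra_simps)
qed

lemma norm_contour_integral_linepath_le:
  assumes h: "continuous_on (ball 0 1) h"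
    and A: "\<And>w. w \<in> ball 0 1 \<Longrightarrow> norm (h w) * sqrt (1 - norm w) \<le> A"
    and z: "z \<in> ball 0 1" "z \<noteq> 0"
  shows "norm (contour_integral (linepath 0 z) h) \<le> 2 * A * norm z"
proof -
  define r where "r = norm z"
  have r: "0 < r" "r < 1" using z by (auto simp: r_def)
  have "0 \<le> A" using A[of 0] by (simp add: order.trans[OF norm_ge_zero])
  have "closed_segment 0 z \<subseteq> ball 0 1" using z by (intro closed_segment_subset) auto
  then have "h contour_integrable_on linepath 0 z"
    by (intro contour_integrable_continuous_linepath continuous_on_subset[OF h])
  then have "(h has_contour_integral contour_integral (linepath 0 z) h) (linepath 0 z)"
    by (rule has_contour_integral_integral)
  then have I: "((\<lambda>s. h (linepath 0 z s) * z) has_integral contour_integral (linepath 0 z) h) {0..1}"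
    by (simp only: has_contour_integral_linepath diff_zero)
  have G: "((\<lambda>s. A * r * (1 / sqrt (1 - s * r))) has_integral A * r * (2 / r * (1 - sqrt (1 - r)))) {0..1}"
    by (rule has_integral_mult_right[OF has_integral_inverse_sqrt_one_minus[OF r]])
  have "norm (h (linepath 0 z s) * z) \<le> A * r * (1 / sqrt (1 - s * r))" if s: "s \<in> {0..1}" for s
  proof -
    have "s * r \<le> r" using s r by (intro mult_left_le_one_le) auto
    then have "s * r < 1" using r by linarith
    moreover have "norm (linepath 0 z s) = s * r" using s by (simp add: linepath_def r_def norm_mult)
    ultimately have "norm (h (linepath 0 z s)) * sqrt (1 - s * r) \<le> A"
      using A[of "linepath 0 z s"] by simp
    then have "norm (h (linepath 0 z s)) \<le> A / sqrt (1 - s * r)"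
      using \<open>s * r < 1\<close> by (simp add: le_divide_eq)
    then have "norm (h (linepath 0 z s)) * r \<le> A / sqrt (1 - s * r) * r"
      using r by (intro mult_right_mono) auto
    then show ?thesis by (simp add: norm_mult r_def[symmetric])
  qed
  then have "norm (contour_integral (linepath 0 z) h) \<le> A * r * (2 / r * (1 - sqrt (1 - r)))"
    by (rule integral_norm_bound_integral[OF has_integral_integrable[OF I] has_integral_integrable[OF G],
        unfolded integral_unique[OF I] integral_unique[OF G]])
  also have "\<dots> = 2 * A * (1 - sqrt (1 - r))" using r by (simp add: field_simps)
  also have "\<dots> \<le> 2 * A * r"
  proof -
    have "1 - r \<le> sqrt (1 - r)"
      using r by (intro real_le_rsqrt) (auto simp: power2_eq_square intro: mult_left_le_one_le)
    then show ?thesis using \<open>0 \<le> A\<close> by (intro mult_left_mono) auto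
  qed
  finally show ?thesis by (simp add: r_def)
qed

lemma norm_Cesaro_t_le:
  assumes f: "f \<in> Hv k" and t: "0 \<le> t" "t < 1" and z: "z \<in> ball 0 1"
  shows "norm (Cesaro_t t f z) \<le> 2 * (2 * real k + 1) ^ k / (1 - t) * vnorm k f"
proof (cases "z = 0")
  case True
  have "1 \<le> (2 * real k + 1) ^ k" by (intro one_le_power) simp
  then have "1 - t \<le> 2 * (2 * real k + 1) ^ k" using t by linarith
  then have "1 \<le> 2 * (2 * real k + 1) ^ k / (1 - t)" using t by (simp add: le_divide_eq)
  then have "vnorm k f \<le> 2 * (2 * real k + 1) ^ k / (1 - t) * vnorm k f"
    using mult_right_mono[OF _ vnorm_nonneg[OF f]] by fastforce
  with vnorm_ge[OF f, of 0] True show ?thesis by (simp add: Cesaro_t_def)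
next
  case False
  define A where "A = vnorm k f * (2 * real k + 1) ^ k / (1 - t)"
  have f_holo: "f holomorphic_on ball 0 1" using f by (simp add: Hv_def)
  have "norm (f w / (1 - of_real t * w)) * sqrt (1 - norm w) \<le> A" if w: "w \<in> ball 0 1" for w
  proof -
    have "1 - t \<le> norm (1 - of_real t * w)"
      using w t by (intro norm_one_minus_of_real_mult_ge) auto
    then have "norm (f w / (1 - of_real t * w)) \<le> norm (f w) / (1 - t)"
      using t by (simp add: norm_divide frac_le)
    then have "norm (f w / (1 - of_real t * w)) * sqrt (1 - norm w)
        \<le> norm (f w) / (1 - t) * sqrt (1 - norm w)"
      using w by (intro mult_right_mono) auto
    also have "\<dots> = norm (f w) * sqrt (1 - norm w) / (1 - t)" by simp
    also have "\<dots> \<le> A"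
      unfolding A_def using Hv_growth_bound[OF f w] t by (simp add: divide_right_mono)
    finally show ?thesis .
  qed
  then have "norm (contour_integral (linepath 0 z) (\<lambda>w. f w / (1 - of_real t * w))) \<le> 2 * A * norm z"
    by (intro norm_contour_integral_linepath_le holomorphic_on_imp_continuous_on
        Cesaro_integrand_holomorphic f_holo t z False)
  then show ?thesis
    using False z by (simp add: Cesaro_t_def A_def norm_divide field_simps)
qed

section \<open>Compactness of the unit ball of \<open>H\<^sup>\<infinity>\<close> in \<open>VH\<close>\<close>

definition Hinf_ball :: "(complex \<Rightarrow> complex) set" where
  "Hinf_ball = {f. f holomorphic_on ball 0 1 \<and> (\<forall>z. z \<notin> ball 0 1 \<longrightarrow> f z = 0)
                   \<and> (\<forall>z\<in>ball 0 1. norm (f z) \<le> 1)}"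

lemma Hinf_ball_subset_Hv: "Hinf_ball \<subseteq> Hv k"
proof -
  have "Hinf_ball \<subseteq> Hv 0" unfolding Hinf_ball_def Hv_def by auto
  then show ?thesis using Hv_mono[of 0 k] by auto
qed

lemma Hinf_ball_subset_VH: "Hinf_ball \<subseteq> VH"
  using Hinf_ball_subset_Hv[of 0] by (auto simp: VH_def)

lemma closedin_Hinf_ball: "closedin VH_top Hinf_ball"
  unfolding closedin_def topspace_VH_top openin_VH_top
proof (intro conjI Hinf_ball_subset_VH Diff_subset ballI)
  fix f assume f: "f \<in> VH - Hinf_ball"
  then have "f holomorphic_on ball 0 1" "\<forall>z. z \<notin> ball 0 1 \<longrightarrow> f z = 0"
    by (auto simp: VH_def Hv_def)
  with f obtain z0 where z0: "z0 \<in> ball 0 1" "1 < norm (f z0)"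
    by (auto simp: Hinf_ball_def not_le)
  define \<delta> where "\<delta> = (norm (f z0) - 1) / 2"
  have "0 < \<delta>" "2 * \<delta> = norm (f z0) - 1" using z0 by (simp_all add: \<delta>_def)
  have "(\<lambda>z. f z + g z) \<in> VH - Hinf_ball" if g: "g \<in> VH" "norm (g z0) \<le> \<delta>" for g
  proof -
    have "norm (f z0) - norm (g z0) \<le> norm (f z0 + g z0)"
      using norm_triangle_ineq2[of "f z0" "- g z0"] by simp
    then have "1 < norm (f z0 + g z0)" using g(2) z0(2) \<open>2 * \<delta> = _\<close> by linarith
    then show ?thesis using f g(1) z0(1) VH_add by (force simp: Hinf_ball_def)
  qed
  then have "(\<lambda>g z. f z + g z) ` {g \<in> VH. norm (g z0) \<le> \<delta>} \<subseteq> VH - Hinf_ball" by blast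
  with VH_basic_nbhd_point_eval[OF z0(1) \<open>0 < \<delta>\<close>]
  show "\<exists>W. VH_basic_nbhd W \<and> (\<lambda>g z. f z + g z) ` W \<subseteq> VH - Hinf_ball" by blast
qed

text \<open>On \<open>Hinf_ball\<close> the truncation at 0 changes nothing; it is there because
  \<open>Metric_space\<close> asks for a nonnegative distance on the whole type.\<close>
definition Hinf_dist :: "(complex \<Rightarrow> complex) \<Rightarrow> (complex \<Rightarrow> complex) \<Rightarrow> real" where
  "Hinf_dist f g = max 0 (vnorm 1 (\<lambda>z. f z - g z))"

lemma Hinf_dist_eq:
  assumes "f \<in> Hinf_ball" "g \<in> Hinf_ball"
  shows "Hinf_dist f g = vnorm 1 (\<lambda>z. f z - g z)"
  using vnorm_nonneg[OF Hv_diff] Hinf_ball_subset_Hv assms unfolding Hinf_dist_def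
  by (metis max_absorb2 subsetD)

lemma Metric_space_Hinf_dist: "Metric_space Hinf_ball Hinf_dist"
proof
  fix x y show "0 \<le> Hinf_dist x y" by (simp add: Hinf_dist_def)
  show "Hinf_dist x y = Hinf_dist y x" unfolding Hinf_dist_def by (subst vnorm_diff_commute) (rule refl)
next
  fix x y assume x: "x \<in> Hinf_ball" and y: "y \<in> Hinf_ball"
  have xy: "(\<lambda>z. x z - y z) \<in> Hv 1" using x y Hinf_ball_subset_Hv Hv_diff by blast
  show "Hinf_dist x y = 0 \<longleftrightarrow> x = y"
  proof
    assume d: "Hinf_dist x y = 0"
    show "x = y"
    proof
      fix z
      show "x z = y z"
      proof (cases "z \<in> ball 0 1")
        case True
        then have "vw z * norm (x z - y z) \<le> 0" "0 < vw z"
          using vnorm_ge[OF xy True] d Hinf_dist_eq[OF x y] vw_pos[of z] by auto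
        then show ?thesis by (simp add: mult_le_0_iff)
      qed (use x y in \<open>simp add: Hinf_ball_def\<close>)
    qed
  qed (simp add: Hinf_dist_def vnorm_def)
next
  fix x y z assume x: "x \<in> Hinf_ball" and y: "y \<in> Hinf_ball" and z: "z \<in> Hinf_ball"
  have "(\<lambda>w. x w - y w) \<in> Hv 1" "(\<lambda>w. y w - z w) \<in> Hv 1"
    using x y z Hinf_ball_subset_Hv Hv_diff by blast+
  from vnorm_add_le[OF this] show "Hinf_dist x z \<le> Hinf_dist x y + Hinf_dist y z"
    using Hinf_dist_eq x y z by simp
qed

lemma Hinf_ball_convergent_subsequence:
  fixes \<sigma> :: "nat \<Rightarrow> complex \<Rightarrow> complex"
  assumes "range \<sigma> \<subseteq> Hinf_ball"
  obtains l r where "l \<in> Hinf_ball" "strict_mono r"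
    "\<And>\<rho>. \<rho> < 1 \<Longrightarrow> uniform_limit (cball 0 \<rho>) (\<sigma> \<circ> r) l sequentially"
proof -
  obtain g r where g: "g holomorphic_on ball 0 1" and r: "strict_mono (r :: nat \<Rightarrow> nat)"
    and pt: "\<And>x. x \<in> ball 0 1 \<Longrightarrow> ((\<lambda>n. \<sigma> (r n) x) \<longlongrightarrow> g x) sequentially"
    and un: "\<And>K. \<lbrakk>compact K; K \<subseteq> ball 0 1\<rbrakk> \<Longrightarrow> uniform_limit K (\<sigma> \<circ> r) g sequentially"
  proof (rule Montel[of "ball 0 1" Hinf_ball \<sigma>])
    show "\<exists>B. \<forall>h\<in>Hinf_ball. \<forall>z\<in>K. norm (h z) \<le> B" if "K \<subseteq> ball 0 1" for K
      using that by (intro exI[of _ 1]) (auto simp: Hinf_ball_def)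
  qed (use assms in \<open>auto simp: Hinf_ball_def\<close>)
  define l where "l z = (if z \<in> ball 0 1 then g z else 0)" for z
  have "\<sigma> n \<in> Hinf_ball" for n using assms by auto
  then have "norm (g z) \<le> 1" if "z \<in> ball 0 1" for z
    by (intro Lim_norm_ubound[OF _ pt[OF that]] always_eventually) (use that in \<open>auto simp: Hinf_ball_def\<close>)
  moreover have "l holomorphic_on ball 0 1"
    using g by (rule holomorphic_transform) (simp add: l_def)
  ultimately have "l \<in> Hinf_ball" by (simp add: Hinf_ball_def l_def)
  moreover have "uniform_limit (cball 0 \<rho>) (\<sigma> \<circ> r) l sequentially" if "\<rho> < 1" for \<rho>
  proof -
    have "cball 0 \<rho> \<subseteq> ball 0 1" using that by auto
    then have "uniform_limit (cball 0 \<rho>) (\<sigma> \<circ> r) g sequentially" by (intro un) auto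
    moreover have "uniform_limit (cball 0 \<rho>) (\<sigma> \<circ> r) g sequentially
        \<longleftrightarrow> uniform_limit (cball 0 \<rho>) (\<sigma> \<circ> r) l sequentially"
      using that by (intro uniform_limit_cong') (auto simp: l_def)
    ultimately show ?thesis by blast
  qed
  ultimately show ?thesis using r that by blast
qed

lemma eventually_Hinf_dist_less:
  assumes u: "\<And>n. u n \<in> Hinf_ball" and l: "l \<in> Hinf_ball"
    and unif: "\<And>\<rho>. \<rho> < 1 \<Longrightarrow> uniform_limit (cball 0 \<rho>) u l sequentially"
    and e: "0 < e"
  shows "eventually (\<lambda>n. Hinf_dist (u n) l < e) sequentially"
proof -
  define \<rho> where "\<rho> = 1 - exp (- (1 + 1 / (e / 4)))"
  have "\<rho> < 1" by (simp add: \<rho>_def)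
  then have "eventually (\<lambda>n. \<forall>z\<in>cball 0 \<rho>. dist (u n z) (l z) < e / 2) sequentially"
    using unif[OF \<open>\<rho> < 1\<close>] half_gt_zero[OF e] unfolding uniform_limit_iff by blast
  then show ?thesis
  proof eventually_elim
    case (elim n)
    have "vw z ^ 1 * norm (u n z - l z) \<le> e / 2" if z: "z \<in> ball 0 1" for z
    proof (cases "norm z \<le> \<rho>")
      case True
      then have "norm (u n z - l z) \<le> e / 2" using elim by (simp add: dist_norm less_imp_le)
      then show ?thesis
        using mult_mono[of "vw z" 1 "norm (u n z - l z)" "e / 2"] vw_pos[of z] vw_le_1[of z] z
        by simp
    next
      case False
      then have "vw z \<le> e / 4"
        using vw_le_near_boundary[of "e / 4" z] e z by (simp add: \<rho>_def)
      moreover have "norm (u n z - l z) \<le> 2"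
        using u[of n] l z norm_triangle_ineq4[of "u n z" "l z"] by (force simp: Hinf_ball_def)
      ultimately show ?thesis
        using mult_mono[of "vw z" "e / 4" "norm (u n z - l z)" 2] vw_pos[of z] z e by simp
    qed
    then have "vnorm 1 (\<lambda>z. u n z - l z) \<le> e / 2"
      unfolding vnorm_def by (intro cSUP_least) auto
    then show ?case using Hinf_dist_eq[OF u l] e by simp
  qed
qed

lemma continuous_map_Hinf_dist_VH_top:
  "continuous_map (Metric_space.mtopology Hinf_ball Hinf_dist) VH_top id"
proof -
  interpret M: Metric_space Hinf_ball Hinf_dist by (rule Metric_space_Hinf_dist)
  show ?thesis
    unfolding continuous_map_def
  proof (intro conjI allI impI)
    show "id \<in> topspace M.mtopology \<rightarrow> topspace VH_top"
      using Hinf_ball_subset_VH by (auto simp: topspace_VH_top)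
    fix U assume "openin VH_top U"
    then have U: "\<forall>f\<in>U. \<exists>W. VH_basic_nbhd W \<and> (\<lambda>g z. f z + g z) ` W \<subseteq> U"
      by (simp add: openin_VH_top)
    show "openin M.mtopology {f \<in> topspace M.mtopology. id f \<in> U}"
      unfolding M.openin_mtopology
    proof (intro conjI allI impI)
      fix f assume "f \<in> {f \<in> topspace M.mtopology. id f \<in> U}"
      then have f: "f \<in> Hinf_ball" "f \<in> U" by auto
      obtain W where W: "VH_basic_nbhd W" "(\<lambda>g z. f z + g z) ` W \<subseteq> U"
        using U f(2) by blast
      obtain e where e: "0 < e" "{g \<in> Hv 1. vnorm 1 g < e} \<subseteq> W"
        using W(1) unfolding VH_basic_nbhd_def by blast
      have "g \<in> U" if g: "g \<in> M.mball f e" for g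
      proof -
        have g': "g \<in> Hinf_ball" "Hinf_dist f g < e" using g by auto
        then have "(\<lambda>z. g z - f z) \<in> Hv 1"
          using f(1) Hinf_ball_subset_Hv Hv_diff by blast
        moreover have "vnorm 1 (\<lambda>z. g z - f z) < e"
          using g' Hinf_dist_eq[OF f(1) g'(1)] vnorm_diff_commute[of 1 f g] by simp
        ultimately have "(\<lambda>z. f z + (g z - f z)) \<in> U" using e W(2) by blast
        then show ?thesis by simp
      qed
      then show "\<exists>r>0. M.mball f r \<subseteq> {f \<in> topspace M.mtopology. id f \<in> U}"
        using e(1) by (intro exI[of _ e]) auto
    qed auto
  qed
qed

lemma compactin_Hinf_ball: "compactin VH_top Hinf_ball"
proof -
  interpret M: Metric_space Hinf_ball Hinf_dist by (rule Metric_space_Hinf_dist)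
  have "compactin M.mtopology Hinf_ball"
    unfolding M.compactin_sequentially
  proof (intro conjI allI impI subset_refl)
    fix \<sigma> :: "nat \<Rightarrow> complex \<Rightarrow> complex" assume \<sigma>: "range \<sigma> \<subseteq> Hinf_ball"
    then obtain l r where l: "l \<in> Hinf_ball" and r: "strict_mono r"
      and unif: "\<And>\<rho>. \<rho> < 1 \<Longrightarrow> uniform_limit (cball 0 \<rho>) (\<sigma> \<circ> r) l sequentially"
      using Hinf_ball_convergent_subsequence by blast
    have \<sigma>r: "(\<sigma> \<circ> r) n \<in> Hinf_ball" for n using \<sigma> by auto
    then have "limitin M.mtopology (\<sigma> \<circ> r) l sequentially"
      unfolding M.limitin_metric using l eventually_Hinf_dist_less[OF \<sigma>r l unif] by simp
    with l r show "\<exists>l r. l \<in> Hinf_ball \<and> strict_mono r \<and> limitin M.mtopology (\<sigma> \<circ> r) l sequentially"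
      by blast
  qed
  from image_compactin[OF this continuous_map_Hinf_dist_VH_top] show ?thesis by simp
qed

section \<open>Compactness of \<open>C\<^sub>t\<close>\<close>

lemma VH_basic_nbhd_bounded_operator_preimage:
  assumes lin: "\<And>f g a b z. f \<in> VH \<Longrightarrow> g \<in> VH \<Longrightarrow> z \<in> ball 0 1 \<Longrightarrow>
                  T (\<lambda>w. a * f w + b * g w) z = a * T f z + b * T g z"
    and bounded: "\<And>k. \<exists>B>0. \<forall>f\<in>Hv k. \<forall>z\<in>ball 0 1. norm (T f z) \<le> B * vnorm k f"
  shows "VH_basic_nbhd {f \<in> VH. \<forall>z\<in>ball 0 1. norm (T f z) \<le> 1}"
  unfolding VH_basic_nbhd_def
proof (intro conjI allI ballI impI)
  fix f g :: "complex \<Rightarrow> complex" and a b :: complex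
  assume f: "f \<in> {f \<in> VH. \<forall>z\<in>ball 0 1. norm (T f z) \<le> 1}"
    and g: "g \<in> {f \<in> VH. \<forall>z\<in>ball 0 1. norm (T f z) \<le> 1}"
    and ab: "norm a + norm b \<le> 1"
  have "norm (T (\<lambda>w. a * f w + b * g w) z) \<le> 1" if z: "z \<in> ball 0 1" for z
  proof -
    have "norm (T (\<lambda>w. a * f w + b * g w) z) \<le> norm a * norm (T f z) + norm b * norm (T g z)"
      using lin[of f g z a b] f g z norm_triangle_ineq[of "a * T f z" "b * T g z"]
      by (simp add: norm_mult)
    also have "\<dots> \<le> norm a * 1 + norm b * 1"
      using f g z by (intro add_mono mult_left_mono) auto
    finally show ?thesis using ab by simp
  qed
  then show "(\<lambda>z. a * f z + b * g z) \<in> {f \<in> VH. \<forall>z\<in>ball 0 1. norm (T f z) \<le> 1}"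
    using f g VH_lincomb by auto
next
  fix k
  obtain B where B: "0 < B" "\<forall>f\<in>Hv k. \<forall>z\<in>ball 0 1. norm (T f z) \<le> B * vnorm k f"
    using bounded by blast
  have "f \<in> {f \<in> VH. \<forall>z\<in>ball 0 1. norm (T f z) \<le> 1}"
    if f: "f \<in> Hv k" "vnorm k f < 1 / B" for f
  proof -
    have "norm (T f z) \<le> 1" if z: "z \<in> ball 0 1" for z
    proof -
      have "norm (T f z) \<le> B * vnorm k f" using B f z by blast
      also have "\<dots> \<le> B * (1 / B)" using f B by (intro mult_left_mono) auto
      finally show ?thesis using B by simp
    qed
    then show ?thesis using f by (auto simp: VH_def)
  qed
  then show "\<exists>\<epsilon>>0. {f \<in> Hv k. vnorm k f < \<epsilon>} \<subseteq> {f \<in> VH. \<forall>z\<in>ball 0 1. norm (T f z) \<le> 1}"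
    using B by (intro exI[of _ "1 / B"]) auto
qed auto

lemma VH_compact_opI:
  assumes "VH_zero_nbhd U" "T ` U \<subseteq> Hinf_ball"
  shows "VH_compact_op T"
proof -
  have "VH_top closure_of (T ` U) \<subseteq> Hinf_ball"
    by (rule closure_of_minimal[OF assms(2) closedin_Hinf_ball])
  then have "compactin VH_top (VH_top closure_of (T ` U))"
    by (rule closed_compactin[OF compactin_Hinf_ball _ closedin_closure_of])
  then show ?thesis using assms Hinf_ball_subset_VH unfolding VH_compact_op_def by blast
qed

lemma Cesaro_t_in_Hv_0:
  assumes "f \<in> VH" "0 \<le> t" "t < 1"
  shows "Cesaro_t t f \<in> Hv 0"
proof -
  obtain k where "f \<in> Hv k" using assms(1) by (auto simp: VH_def)
  then have "\<forall>z\<in>ball 0 1. vw z ^ 0 * norm (Cesaro_t t f z)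
      \<le> 2 * (2 * real k + 1) ^ k / (1 - t) * vnorm k f"
    using norm_Cesaro_t_le assms by simp
  then show ?thesis
    using Cesaro_t_holomorphic[OF VH_holomorphic] Cesaro_t_outside assms unfolding Hv_def by blast
qed

theorem proposition3p4:
  fixes t :: real
  assumes "0 \<le> t" and "t < 1"
  shows "(\<forall>f\<in>VH. Cesaro_t t f \<in> VH) \<and> VH_compact_op (Cesaro_t t)"
proof
  show "\<forall>f\<in>VH. Cesaro_t t f \<in> VH" using Cesaro_t_in_Hv_0 assms by (auto simp: VH_def)
  define U where "U = {f \<in> VH. \<forall>z\<in>ball 0 1. norm (Cesaro_t t f z) \<le> 1}"
  have "VH_basic_nbhd U"
    unfolding U_def
  proof (rule VH_basic_nbhd_bounded_operator_preimage)
    show "Cesaro_t t (\<lambda>w. a * f w + b * g w) z = a * Cesaro_t t f z + b * Cesaro_t t g z"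
      if "f \<in> VH" "g \<in> VH" "z \<in> ball 0 1" for f g a b z
      using Cesaro_t_lincomb VH_holomorphic that assms by blast
    show "\<exists>B>0. \<forall>f\<in>Hv k. \<forall>z\<in>ball 0 1. norm (Cesaro_t t f z) \<le> B * vnorm k f" for k
      using norm_Cesaro_t_le assms by (intro exI[of _ "2 * (2 * real k + 1) ^ k / (1 - t)"]) auto
  qed
  then have "VH_zero_nbhd U" by (auto simp: VH_zero_nbhd_def U_def)
  moreover have "Cesaro_t t ` U \<subseteq> Hinf_ball"
    using Cesaro_t_holomorphic[OF VH_holomorphic] Cesaro_t_outside assms
    by (auto simp: U_def Hinf_ball_def)
  ultimately show "VH_compact_op (Cesaro_t t)" by (rule VH_compact_opI)
qed

end
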